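(* Let $M\cong\mathbb{Z}^n$ be a lattice, $\mathbb{T}=\mathrm{Spec}\,\mathbb{C}[M]$, and identify the automorphism group of the variety $\mathbb{T}$ with $\mathrm{Aut}(\mathbb{T})=\mathbb{T}\rtimes\mathrm{GL}(M)$ (translations by $\mathbb{T}$, and $A\in\mathrm{GL}(M)$ acting via $\chi^m\mapsto\chi^{A(m)}$). Let $\mathbb{W}_1,\mathbb{W}_2$ be finite subgroups of $\mathrm{GL}(M)$ and $G_i=\mathbb{T}\rtimes\mathbb{W}_i\subset\mathrm{Aut}(\mathbb{T})$ with their natural actions on $\mathbb{T}$. The following are equivalent: (a) there exist an isomorphism $\varphi\colon G_1\to G_2$ and a $\varphi$-equivariant biregular map $\Phi\colon\mathbb{T}\to\mathbb{T}$; (b) $G_1$ and $G_2$ are conjugate in $\mathrm{Aut}(\mathbb{T})$; (c) $\mathbb{W}_1$ and $\mathbb{W}_2$ are conjugate in $\mathrm{GL}(M)$.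
   Context: For a group homomorphism $\varphi\colon G_1\to G_2$, a map $\Phi\colon\mathbb{T}\to\mathbb{T}$ is $\varphi$-equivariant if $\Phi(g\cdot x)=\varphi(g)\cdot\Phi(x)$ for all $g\in G_1$, $x\in\mathbb{T}$. *)

theory Defs
  imports "HOL-Analysis.Analysis" "HOL-Algebra.Algebra"
begin

text \<open>The lattice M is int^'n (rank n = CARD('n)). A point of the torus
  T = Spec C[M] is a homomorphism M -> C^*, i.e. a vector of nonzero complex
  numbers x; the character chi^m evaluates to the monomial prod_i x_i^(m_i).\<close>

definition torus :: "(complex ^ 'n :: finite) set" where
  "torus = {x. \<forall>i. x $ i \<noteq> 0}"

definition character :: "int ^ 'n \<Rightarrow> complex ^ 'n \<Rightarrow> complex" where
  "character m x = (\<Prod>i\<in>UNIV. (x $ i) powi (m $ i))"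

definition GLM :: "(int ^ 'n ^ 'n :: finite) monoid" where
  "GLM = \<lparr>carrier = {A. invertible A}, mult = (\<lambda>A B. A ** B), one = mat 1\<rparr>"

text \<open>The automorphism of T induced by A in GL(M): the comorphism sends chi^m to
  chi^(A m); on points x (as characters of M) it is x |-> x o A, i.e. the
  j-th coordinate is chi^(A e_j)(x).\<close>
definition lin_act :: "int ^ 'n ^ 'n \<Rightarrow> complex ^ 'n \<Rightarrow> complex ^ 'n :: finite" where
  "lin_act A x = (\<chi> j. character (column j A) x)"

definition aut_elem :: "complex ^ 'n \<Rightarrow> int ^ 'n ^ 'n \<Rightarrow> complex ^ 'n \<Rightarrow> complex ^ 'n :: finite" where
  "aut_elem t A = (\<lambda>x\<in>torus. t * lin_act A x)"

definition semidir :: "(int ^ 'n ^ 'n :: finite) set \<Rightarrow> (complex ^ 'n \<Rightarrow> complex ^ 'n) set" where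
  "semidir W = {aut_elem t A | t A. t \<in> torus \<and> A \<in> W}"

definition AutT :: "(complex ^ 'n :: finite \<Rightarrow> complex ^ 'n) set" where
  "AutT = semidir (carrier GLM)"

abbreviation BT :: "(complex ^ 'n :: finite \<Rightarrow> complex ^ 'n) monoid" where
  "BT \<equiv> BijGroup torus"

definition grp_of :: "(complex ^ 'n :: finite \<Rightarrow> complex ^ 'n) set \<Rightarrow> (complex ^ 'n \<Rightarrow> complex ^ 'n) monoid" where
  "grp_of G = BT\<lparr>carrier := G\<rparr>"

end

theory Submission
  imports Defs
begin

(* (a) <-> (b) holds in any group of permutations: if Phi is phi-equivariant then
   phi g = Phi g Phi^-1, so phi is conjugation by Phi; conversely, conjugation by h is an
   isomorphism onto its image for which h itself is equivariant.

   (b) <-> (c): conjugating x |-> t A(x) by h = (x |-> s P(x)) gives a map with linear part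
   P^-1 A P, and as t ranges over T so does the translation part of the conjugate. Hence
   conjugation by h maps T W onto T (P^-1 W P), and T W determines W, since x |-> t A(x)
   determines t (its value at 1) and A (its values at the points (1,..,1,2,1,..,1)).
   Only W_i <= GL(M) is used. *)

lemma (in group) conjugation_iso_onto_image:
  assumes "h \<in> carrier G" and "H \<subseteq> carrier G"
  shows "(\<lambda>g. h \<otimes> g \<otimes> inv h) \<in> iso (G\<lparr>carrier := H\<rparr>) (G\<lparr>carrier := (\<lambda>g. h \<otimes> g \<otimes> inv h) ` H\<rparr>)"
proof -
  have "h \<otimes> (x \<otimes> y) \<otimes> inv h = (h \<otimes> x \<otimes> inv h) \<otimes> (h \<otimes> y \<otimes> inv h)"
    if "x \<in> carrier G" "y \<in> carrier G" for x y
  proof -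
    have "h \<otimes> (x \<otimes> y) \<otimes> inv h = h \<otimes> x \<otimes> (inv h \<otimes> h) \<otimes> y \<otimes> inv h"
      using that assms(1) by (simp add: m_assoc)
    also have "\<dots> = (h \<otimes> x \<otimes> inv h) \<otimes> (h \<otimes> y \<otimes> inv h)"
      using that assms(1) by (simp only: m_assoc m_closed inv_closed)
    finally show ?thesis .
  qed
  then show ?thesis
    using assms by (auto simp: iso_def hom_def bij_betw_def inj_on_def subset_iff)
qed

lemma intertwines_iff_conjugate:
  assumes "\<Phi> \<in> Bij S" and "g \<in> Bij S" and "g' \<in> Bij S"
  shows "(\<forall>x\<in>S. \<Phi> (g x) = g' (\<Phi> x))
     \<longleftrightarrow> g' = \<Phi> \<otimes>\<^bsub>BijGroup S\<^esub> g \<otimes>\<^bsub>BijGroup S\<^esub> inv\<^bsub>BijGroup S\<^esub> \<Phi>"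
proof -
  interpret group "BijGroup S" by (rule group_BijGroup)
  have carrier: "carrier (BijGroup S) = Bij S"
    by (simp add: BijGroup_def)
  have "(\<forall>x\<in>S. \<Phi> (g x) = g' (\<Phi> x)) \<longleftrightarrow> (\<lambda>x\<in>S. \<Phi> (g x)) = (\<lambda>x\<in>S. g' (\<Phi> x))"
    by (auto simp: fun_eq_iff)
  also have "\<dots> \<longleftrightarrow> \<Phi> \<otimes>\<^bsub>BijGroup S\<^esub> g = g' \<otimes>\<^bsub>BijGroup S\<^esub> \<Phi>"
    using assms by (simp add: BijGroup_def compose_def)
  also have "\<dots> \<longleftrightarrow> g' = \<Phi> \<otimes>\<^bsub>BijGroup S\<^esub> g \<otimes>\<^bsub>BijGroup S\<^esub> inv\<^bsub>BijGroup S\<^esub> \<Phi>"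
    using assms carrier inv_solve_right [of g' "\<Phi> \<otimes>\<^bsub>BijGroup S\<^esub> g" \<Phi>] by auto
  finally show ?thesis .
qed

lemma equivariant_iso_iff_conjugate:
  assumes "G1 \<subseteq> Bij S" and "G2 \<subseteq> Bij S" and "H \<subseteq> Bij S"
  shows "(\<exists>\<phi> \<Phi>. \<phi> \<in> iso (BijGroup S\<lparr>carrier := G1\<rparr>) (BijGroup S\<lparr>carrier := G2\<rparr>) \<and> \<Phi> \<in> H
            \<and> (\<forall>g\<in>G1. \<forall>x\<in>S. \<Phi> (g x) = \<phi> g (\<Phi> x)))
     \<longleftrightarrow> (\<exists>h\<in>H. G2 = (\<lambda>g. h \<otimes>\<^bsub>BijGroup S\<^esub> g \<otimes>\<^bsub>BijGroup S\<^esub> inv\<^bsub>BijGroup S\<^esub> h) ` G1)"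
    (is "?equivariant \<longleftrightarrow> (\<exists>h\<in>H. G2 = ?conj h ` G1)")
proof -
  interpret group "BijGroup S" by (rule group_BijGroup)
  have carrier: "carrier (BijGroup S) = Bij S"
    by (simp add: BijGroup_def)
  show ?thesis
  proof
    assume ?equivariant
    then obtain \<phi> \<Phi> where iso: "\<phi> \<in> iso (BijGroup S\<lparr>carrier := G1\<rparr>) (BijGroup S\<lparr>carrier := G2\<rparr>)"
      and "\<Phi> \<in> H" and equivariant: "\<forall>g\<in>G1. \<forall>x\<in>S. \<Phi> (g x) = \<phi> g (\<Phi> x)"
      by blast
    have "G2 = \<phi> ` G1"
      using iso by (simp add: iso_def bij_betw_def)
    also have "\<dots> = ?conj \<Phi> ` G1"
    proof (rule image_cong [OF refl])
      fix g assume "g \<in> G1"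
      moreover have "\<phi> g \<in> G2"
        using iso \<open>g \<in> G1\<close> by (auto simp: iso_def hom_def)
      ultimately show "\<phi> g = ?conj \<Phi> g"
        using assms \<open>\<Phi> \<in> H\<close> equivariant intertwines_iff_conjugate by blast
    qed
    finally show "\<exists>h\<in>H. G2 = ?conj h ` G1"
      using \<open>\<Phi> \<in> H\<close> by blast
  next
    assume "\<exists>h\<in>H. G2 = ?conj h ` G1"
    then obtain h where "h \<in> H" and G2: "G2 = ?conj h ` G1"
      by blast
    have "?conj h \<in> iso (BijGroup S\<lparr>carrier := G1\<rparr>) (BijGroup S\<lparr>carrier := G2\<rparr>)"
      unfolding G2 using assms \<open>h \<in> H\<close> carrier by (intro conjugation_iso_onto_image) auto
    moreover have "\<forall>x\<in>S. h (g x) = ?conj h g (h x)" if "g \<in> G1" for g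
    proof -
      have "h \<in> Bij S" "g \<in> Bij S"
        using assms \<open>h \<in> H\<close> \<open>g \<in> G1\<close> by auto
      moreover have "?conj h g \<in> Bij S"
        using calculation by (simp flip: carrier)
      ultimately show ?thesis
        by (simp add: intertwines_iff_conjugate)
    qed
    ultimately show ?equivariant
      using \<open>h \<in> H\<close> by blast
  qed
qed

lemma prod_power_int_distrib:
  fixes f :: "'b \<Rightarrow> 'a :: field"
  shows "(\<Prod>i\<in>A. f i) powi n = (\<Prod>i\<in>A. f i powi n)"
  by (induction A rule: infinite_finite_induct) (auto simp: power_int_mult_distrib)

lemma power_int_sum:
  fixes x :: "'a :: field"
  assumes "x \<noteq> 0"
  shows "x powi (\<Sum>i\<in>A. f i) = (\<Prod>i\<in>A. x powi f i)"
  using assms by (induction A rule: infinite_finite_induct) (auto simp: power_int_add)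

lemma two_power_int_inject:
  assumes "(2 :: complex) powi a = 2 powi b"
  shows "a = b"
proof -
  have "(2 :: real) powi a = 2 powi b"
    using assms by (metis of_real_numeral of_real_eq_of_real_power_int_cancel_iff)
  then show ?thesis
    using power_int_strict_increasing [of a b "2 :: real"] power_int_strict_increasing [of b a "2 :: real"]
    by (cases a b rule: linorder_cases) auto
qed

lemma torus_mult: "x \<in> torus \<Longrightarrow> y \<in> torus \<Longrightarrow> x * y \<in> torus"
  by (simp add: torus_def)

lemma one_in_torus: "1 \<in> torus"
  by (simp add: torus_def)

definition torus_inverse :: "complex ^ 'n \<Rightarrow> complex ^ 'n :: finite" where
  "torus_inverse x = (\<chi> i. inverse (x $ i))"

lemma torus_inverse_in_torus: "x \<in> torus \<Longrightarrow> torus_inverse x \<in> torus"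
  by (simp add: torus_def torus_inverse_def)

lemma torus_right_inverse: "x \<in> torus \<Longrightarrow> x * torus_inverse x = 1"
  by (simp add: torus_def torus_inverse_def vec_eq_iff)

lemma torus_left_inverse: "x \<in> torus \<Longrightarrow> torus_inverse x * x = 1"
  by (simp add: torus_def torus_inverse_def vec_eq_iff)

lemma lin_act_nth: "lin_act A x $ j = (\<Prod>i\<in>UNIV. x $ i powi (A $ i $ j))"
  by (simp add: lin_act_def character_def column_def)

lemma lin_act_in_torus: "x \<in> torus \<Longrightarrow> lin_act A x \<in> torus"
  by (simp add: torus_def lin_act_nth)

lemma lin_act_mult: "lin_act A (x * y) = lin_act A x * lin_act A y"
  by (simp add: vec_eq_iff lin_act_nth power_int_mult_distrib prod.distrib)

lemma lin_act_one: "lin_act A 1 = 1"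
  by (simp add: vec_eq_iff lin_act_nth)

lemma lin_act_mat_1: "lin_act (mat 1) x = x"
proof -
  have "lin_act (mat 1) x $ j = (\<Prod>i\<in>UNIV. if i = j then x $ i else 1)" for j
    unfolding lin_act_nth by (rule prod.cong) (auto simp: mat_def)
  then show ?thesis
    by (simp add: vec_eq_iff)
qed

lemma lin_act_lin_act:
  assumes "x \<in> torus"
  shows "lin_act A (lin_act B x) = lin_act (B ** A) x"
proof -
  have "lin_act A (lin_act B x) $ j = lin_act (B ** A) x $ j" for j
  proof -
    have "lin_act A (lin_act B x) $ j = (\<Prod>i\<in>UNIV. \<Prod>k\<in>UNIV. x $ k powi (B $ k $ i * A $ i $ j))"
      by (simp add: lin_act_nth prod_power_int_distrib power_int_mult)
    also have "\<dots> = (\<Prod>k\<in>UNIV. \<Prod>i\<in>UNIV. x $ k powi (B $ k $ i * A $ i $ j))"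
      by (rule prod.swap)
    also have "\<dots> = (\<Prod>k\<in>UNIV. x $ k powi (\<Sum>i\<in>UNIV. B $ k $ i * A $ i $ j))"
      using assms by (simp add: power_int_sum torus_def)
    also have "\<dots> = lin_act (B ** A) x $ j"
      by (simp add: lin_act_nth matrix_matrix_mult_def)
    finally show ?thesis .
  qed
  then show ?thesis
    by (simp add: vec_eq_iff)
qed

lemma lin_act_inject:
  assumes "\<forall>x\<in>torus. lin_act A x = lin_act B x"
  shows "A = B"
proof -
  have "A $ i $ j = B $ i $ j" for i j
  proof -
    define x :: "complex ^ 'a" where "x = (\<chi> k. if k = i then 2 else 1)"
    have "lin_act C x $ j = 2 powi (C $ i $ j)" for C :: "int ^ 'a ^ 'a"
    proof -
      have "lin_act C x $ j = (\<Prod>k\<in>UNIV. if k = i then 2 powi (C $ i $ j) else 1)"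
        unfolding lin_act_nth by (rule prod.cong) (auto simp: x_def)
      then show ?thesis
        by simp
    qed
    moreover have "x \<in> torus"
      by (simp add: x_def torus_def)
    ultimately show ?thesis
      using assms two_power_int_inject by metis
  qed
  then show ?thesis
    by (simp add: vec_eq_iff)
qed

lemma carrier_GLM: "A \<in> carrier GLM \<longleftrightarrow> invertible A"
  by (simp add: GLM_def)

lemma mult_GLM: "A \<otimes>\<^bsub>GLM\<^esub> B = A ** B"
  by (simp add: GLM_def)

lemma group_GLM: "group GLM"
proof (rule groupI)
  show "A \<otimes>\<^bsub>GLM\<^esub> B \<in> carrier GLM" if "A \<in> carrier GLM" "B \<in> carrier GLM" for A B
    using that by (simp add: carrier_GLM mult_GLM invertible_mult)
  show "\<one>\<^bsub>GLM\<^esub> \<in> carrier GLM"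
    by (auto simp: GLM_def invertible_def)
  show "A \<otimes>\<^bsub>GLM\<^esub> B \<otimes>\<^bsub>GLM\<^esub> C = A \<otimes>\<^bsub>GLM\<^esub> (B \<otimes>\<^bsub>GLM\<^esub> C)" for A B C
    by (simp add: mult_GLM matrix_mul_assoc)
  show "\<one>\<^bsub>GLM\<^esub> \<otimes>\<^bsub>GLM\<^esub> A = A" for A
    by (simp add: GLM_def)
  show "\<exists>B\<in>carrier GLM. B \<otimes>\<^bsub>GLM\<^esub> A = \<one>\<^bsub>GLM\<^esub>" if "A \<in> carrier GLM" for A
    using that by (auto simp: GLM_def invertible_def)
qed

interpretation GLM: group GLM
  by (rule group_GLM)

lemma GLM_inv_mult_cancel:
  assumes "P \<in> carrier GLM"
  shows "inv\<^bsub>GLM\<^esub> P ** P = mat 1" and "P ** inv\<^bsub>GLM\<^esub> P = mat 1"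
  using GLM.l_inv [OF assms] GLM.r_inv [OF assms] by (simp_all add: mult_GLM GLM_def)

lemma aut_elem_apply: "x \<in> torus \<Longrightarrow> aut_elem t A x = t * lin_act A x"
  by (simp add: aut_elem_def)

lemma aut_elem_in_torus: "t \<in> torus \<Longrightarrow> x \<in> torus \<Longrightarrow> aut_elem t A x \<in> torus"
  by (simp add: aut_elem_apply torus_mult lin_act_in_torus)

lemma aut_elem_aut_elem:
  assumes "u \<in> torus" and "x \<in> torus"
  shows "aut_elem t A (aut_elem u B x) = aut_elem (t * lin_act A u) (B ** A) x"
proof -
  have "aut_elem u B x \<in> torus"
    using assms by (rule aut_elem_in_torus)
  then show ?thesis
    using assms by (simp add: aut_elem_apply lin_act_mult lin_act_lin_act mult.assoc)
qed

lemma aut_elem_one_mat_1: "aut_elem 1 (mat 1) = (\<lambda>x\<in>torus. x)"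
  by (simp add: aut_elem_def lin_act_mat_1)

lemma aut_elem_in_Bij:
  assumes t: "t \<in> torus" and A: "A \<in> carrier GLM"
  shows "aut_elem t A \<in> Bij torus"
proof -
  define A' where "A' = inv\<^bsub>GLM\<^esub> A"
  define t' where "t' = lin_act A' (torus_inverse t)"
  have t': "t' \<in> torus"
    using t by (simp add: t'_def lin_act_in_torus torus_inverse_in_torus)
  have "t' * lin_act A' t = 1"
    using t by (simp add: t'_def mult.commute torus_right_inverse lin_act_one flip: lin_act_mult)
  moreover have "t * lin_act A t' = 1"
    using A t by (simp add: t'_def A'_def lin_act_lin_act torus_inverse_in_torus
        GLM_inv_mult_cancel lin_act_mat_1 torus_right_inverse)
  moreover have "A ** A' = mat 1" "A' ** A = mat 1"
    using A by (simp_all add: A'_def GLM_inv_mult_cancel)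
  ultimately have "bij_betw (aut_elem t A) torus torus"
    using t t' by (intro bij_betw_byWitness [where f' = "aut_elem t' A'"])
      (auto simp: aut_elem_aut_elem aut_elem_one_mat_1 aut_elem_in_torus)
  then show ?thesis
    by (simp add: Bij_def aut_elem_def)
qed

lemma semidir_subset_Bij: "W \<subseteq> carrier GLM \<Longrightarrow> semidir W \<subseteq> Bij torus"
  by (auto simp: semidir_def aut_elem_in_Bij)

lemma mult_aut_elem:
  assumes "t \<in> torus" "u \<in> torus" "A \<in> carrier GLM" "B \<in> carrier GLM"
  shows "aut_elem t A \<otimes>\<^bsub>BT\<^esub> aut_elem u B = aut_elem (t * lin_act A u) (B ** A)"
proof -
  have "aut_elem t A \<otimes>\<^bsub>BT\<^esub> aut_elem u B = (\<lambda>x\<in>torus. aut_elem t A (aut_elem u B x))"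
    using assms by (simp add: BijGroup_def compose_def aut_elem_in_Bij)
  also have "\<dots> = aut_elem (t * lin_act A u) (B ** A)"
    unfolding aut_elem_def [of "t * lin_act A u"] using assms
    by (intro restrict_ext) (simp only: aut_elem_aut_elem, simp add: aut_elem_apply)
  finally show ?thesis .
qed

lemma aut_elem_inject:
  assumes "t \<in> torus" and "t' \<in> torus" and eq: "aut_elem t A = aut_elem t' A'"
  shows "t = t' \<and> A = A'"
proof
  show "t = t'"
    using fun_cong [OF eq, of 1] by (simp add: aut_elem_apply lin_act_one one_in_torus)
  have "lin_act A x = lin_act A' x" if "x \<in> torus" for x
  proof -
    have "t * lin_act A x = t * lin_act A' x"
      using fun_cong [OF eq, of x] \<open>t = t'\<close> that by (simp add: aut_elem_apply)
    then have "torus_inverse t * t * lin_act A x = torus_inverse t * t * lin_act A' x"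
      by (simp add: mult.assoc)
    then show ?thesis
      using assms(1) by (simp add: mult.commute torus_right_inverse)
  qed
  then show "A = A'"
    by (simp add: lin_act_inject)
qed

lemma semidir_eq_iff: "semidir W = semidir W' \<longleftrightarrow> W = W'"
proof
  have "A \<in> W'" if "semidir W = semidir W'" "A \<in> W" for W W' A
  proof -
    have "aut_elem 1 A \<in> semidir W'"
      using that one_in_torus by (auto simp: semidir_def)
    then obtain t B where "t \<in> torus" "B \<in> W'" "aut_elem 1 A = aut_elem t B"
      by (auto simp: semidir_def)
    then show "A \<in> W'"
      using one_in_torus aut_elem_inject by blast
  qed
  then show "semidir W = semidir W' \<Longrightarrow> W = W'"
    by blast
qed simp

lemma conjugate_aut_elem:
  assumes s: "s \<in> torus" and t: "t \<in> torus" and P: "P \<in> carrier GLM" and A: "A \<in> carrier GLM"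
  defines "A' \<equiv> inv\<^bsub>GLM\<^esub> P ** A ** P"
  shows "aut_elem s P \<otimes>\<^bsub>BT\<^esub> aut_elem t A \<otimes>\<^bsub>BT\<^esub> inv\<^bsub>BT\<^esub> aut_elem s P
       = aut_elem (s * lin_act P t * torus_inverse (lin_act A' s)) A'"
proof -
  interpret BT: group BT
    by (rule group_BijGroup)
  define u where "u = s * lin_act P t * torus_inverse (lin_act A' s)"
  have A': "A' \<in> carrier GLM"
    using P A by (simp add: A'_def flip: mult_GLM)
  have u: "u \<in> torus"
    using s t by (simp add: u_def torus_mult lin_act_in_torus torus_inverse_in_torus)
  have "u * lin_act A' s = s * lin_act P t"
    using s by (simp add: u_def mult.assoc torus_left_inverse lin_act_in_torus)
  moreover have "P ** A' = A ** P"
    using P by (simp add: A'_def matrix_mul_assoc GLM_inv_mult_cancel)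
  ultimately have "aut_elem s P \<otimes>\<^bsub>BT\<^esub> aut_elem t A = aut_elem u A' \<otimes>\<^bsub>BT\<^esub> aut_elem s P"
    using s t u P A A' by (simp add: mult_aut_elem)
  moreover have "aut_elem s P \<in> carrier BT" "aut_elem t A \<in> carrier BT" "aut_elem u A' \<in> carrier BT"
    using s t u P A A' by (simp_all add: BijGroup_def aut_elem_in_Bij)
  ultimately show ?thesis
    by (simp add: BT.inv_solve_right' u_def)
qed

lemma conjugate_semidir:
  assumes s: "s \<in> torus" and P: "P \<in> carrier GLM" and W: "W \<subseteq> carrier GLM"
  shows "(\<lambda>g. aut_elem s P \<otimes>\<^bsub>BT\<^esub> g \<otimes>\<^bsub>BT\<^esub> inv\<^bsub>BT\<^esub> aut_elem s P) ` semidir W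
       = semidir ((\<lambda>A. inv\<^bsub>GLM\<^esub> P \<otimes>\<^bsub>GLM\<^esub> A \<otimes>\<^bsub>GLM\<^esub> P) ` W)"
    (is "?conj ` semidir W = semidir ?W'")
proof
  show "?conj ` semidir W \<subseteq> semidir ?W'"
  proof
    fix g assume "g \<in> ?conj ` semidir W"
    then obtain t A where t: "t \<in> torus" and A: "A \<in> W" and g: "g = ?conj (aut_elem t A)"
      by (auto simp: semidir_def)
    define t' where "t' = s * lin_act P t * torus_inverse (lin_act (inv\<^bsub>GLM\<^esub> P ** A ** P) s)"
    have "g = aut_elem t' (inv\<^bsub>GLM\<^esub> P ** A ** P)"
      using s t P A W by (auto simp: g t'_def conjugate_aut_elem)
    moreover have "t' \<in> torus"
      using s t by (simp add: t'_def torus_mult lin_act_in_torus torus_inverse_in_torus)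
    ultimately show "g \<in> semidir ?W'"
      using A by (auto simp: semidir_def mult_GLM)
  qed
  show "semidir ?W' \<subseteq> ?conj ` semidir W"
  proof
    fix g assume "g \<in> semidir ?W'"
    then obtain u A where u: "u \<in> torus" and A: "A \<in> W"
      and g: "g = aut_elem u (inv\<^bsub>GLM\<^esub> P ** A ** P)"
      by (auto simp: semidir_def mult_GLM)
    define c where "c = lin_act (inv\<^bsub>GLM\<^esub> P ** A ** P) s"
    define t where "t = lin_act (inv\<^bsub>GLM\<^esub> P) (torus_inverse s * u * c)"
    have c: "c \<in> torus"
      using s by (simp add: c_def lin_act_in_torus)
    have t: "t \<in> torus"
      using s u c by (simp add: t_def lin_act_in_torus torus_mult torus_inverse_in_torus)
    have "lin_act P t = torus_inverse s * u * c"
      using s u c P by (simp add: t_def lin_act_lin_act GLM_inv_mult_cancel lin_act_mat_1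
          torus_mult torus_inverse_in_torus)
    then have "s * lin_act P t * torus_inverse c = u"
      using s c by (simp add: mult.assoc torus_right_inverse flip: mult.assoc [of s])
    then have "g = ?conj (aut_elem t A)"
      using s t P A W by (auto simp: g conjugate_aut_elem c_def)
    moreover have "aut_elem t A \<in> semidir W"
      using t A by (auto simp: semidir_def)
    ultimately show "g \<in> ?conj ` semidir W"
      by blast
  qed
qed

lemma conjugate_semidir_iff_conjugate:
  assumes W1: "W1 \<subseteq> carrier GLM"
  shows "(\<exists>h\<in>AutT. semidir W2 = (\<lambda>g. h \<otimes>\<^bsub>BT\<^esub> g \<otimes>\<^bsub>BT\<^esub> inv\<^bsub>BT\<^esub> h) ` semidir W1)
     \<longleftrightarrow> (\<exists>P\<in>carrier GLM. W2 = (\<lambda>A. P \<otimes>\<^bsub>GLM\<^esub> A \<otimes>\<^bsub>GLM\<^esub> inv\<^bsub>GLM\<^esub> P) ` W1)"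
proof
  assume "\<exists>h\<in>AutT. semidir W2 = (\<lambda>g. h \<otimes>\<^bsub>BT\<^esub> g \<otimes>\<^bsub>BT\<^esub> inv\<^bsub>BT\<^esub> h) ` semidir W1"
  then obtain s P where s: "s \<in> torus" and P: "P \<in> carrier GLM"
    and W2: "semidir W2 = (\<lambda>g. aut_elem s P \<otimes>\<^bsub>BT\<^esub> g \<otimes>\<^bsub>BT\<^esub> inv\<^bsub>BT\<^esub> aut_elem s P) ` semidir W1"
    by (auto simp: AutT_def semidir_def)
  have "semidir W2 = semidir ((\<lambda>A. inv\<^bsub>GLM\<^esub> P \<otimes>\<^bsub>GLM\<^esub> A \<otimes>\<^bsub>GLM\<^esub> P) ` W1)"
    unfolding W2 using s P W1 by (rule conjugate_semidir)
  then show "\<exists>P\<in>carrier GLM. W2 = (\<lambda>A. P \<otimes>\<^bsub>GLM\<^esub> A \<otimes>\<^bsub>GLM\<^esub> inv\<^bsub>GLM\<^esub> P) ` W1"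
    using P by (intro bexI [of _ "inv\<^bsub>GLM\<^esub> P"]) (simp_all add: semidir_eq_iff)
next
  assume "\<exists>P\<in>carrier GLM. W2 = (\<lambda>A. P \<otimes>\<^bsub>GLM\<^esub> A \<otimes>\<^bsub>GLM\<^esub> inv\<^bsub>GLM\<^esub> P) ` W1"
  then obtain P where P: "P \<in> carrier GLM" and W2: "W2 = (\<lambda>A. P \<otimes>\<^bsub>GLM\<^esub> A \<otimes>\<^bsub>GLM\<^esub> inv\<^bsub>GLM\<^esub> P) ` W1"
    by blast
  have "aut_elem 1 (inv\<^bsub>GLM\<^esub> P) \<in> AutT"
    using P one_in_torus by (auto simp: AutT_def semidir_def)
  moreover have "semidir W2 = (\<lambda>g. aut_elem 1 (inv\<^bsub>GLM\<^esub> P) \<otimes>\<^bsub>BT\<^esub> g \<otimes>\<^bsub>BT\<^esub> inv\<^bsub>BT\<^esub> aut_elem 1 (inv\<^bsub>GLM\<^esub> P)) ` semidir W1"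
    using conjugate_semidir [OF one_in_torus GLM.inv_closed [OF P] W1] P by (simp add: W2)
  ultimately show "\<exists>h\<in>AutT. semidir W2 = (\<lambda>g. h \<otimes>\<^bsub>BT\<^esub> g \<otimes>\<^bsub>BT\<^esub> inv\<^bsub>BT\<^esub> h) ` semidir W1"
    by blast
qed

theorem lemma3p1:
  fixes W1 W2 :: "(int ^ 'n ^ 'n :: finite) set"
  assumes "subgroup W1 GLM" and "finite W1"
      and "subgroup W2 GLM" and "finite W2"
  shows "((\<exists>\<phi> \<Phi>. \<phi> \<in> iso (grp_of (semidir W1)) (grp_of (semidir W2))
              \<and> \<Phi> \<in> AutT
              \<and> (\<forall>g\<in>semidir W1. \<forall>x\<in>torus. \<Phi> (g x) = \<phi> g (\<Phi> x)))
          \<longleftrightarrow> (\<exists>h\<in>AutT. semidir W2 = (\<lambda>g. h \<otimes>\<^bsub>BT\<^esub> g \<otimes>\<^bsub>BT\<^esub> inv\<^bsub>BT\<^esub> h) ` semidir W1))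
       \<and> ((\<exists>h\<in>AutT. semidir W2 = (\<lambda>g. h \<otimes>\<^bsub>BT\<^esub> g \<otimes>\<^bsub>BT\<^esub> inv\<^bsub>BT\<^esub> h) ` semidir W1)
          \<longleftrightarrow> (\<exists>P\<in>carrier GLM. W2 = (\<lambda>A. P \<otimes>\<^bsub>GLM\<^esub> A \<otimes>\<^bsub>GLM\<^esub> inv\<^bsub>GLM\<^esub> P) ` W1))"
proof -
  have W1: "W1 \<subseteq> carrier GLM" and W2: "W2 \<subseteq> carrier GLM"
    using assms subgroup.subset by blast+
  have "AutT \<subseteq> Bij torus"
    by (simp add: AutT_def semidir_subset_Bij)
  then show ?thesis
    unfolding grp_of_def
    by (intro conjI equivariant_iso_iff_conjugate conjugate_semidir_iff_conjugate semidir_subset_Bij W1 W2)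
qed

end
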